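(* Let $q$ be a prime power and $1\le t_i\le t_o\le s$. If there exists a linear $(t_i,t_o,s,q)$-AONT, then there exists a linear $(t_i,t_o',s,q)$-AONT for every $t_o'$ with $t_o\le t_o'\le s$.
   Context: A linear $(t_i,t_o,s,q)$-AONT is given by an invertible $s\times s$ matrix $M$ over $\mathbb{F}_q$ defining the map $\mathbf{x}\mapsto\mathbf{y}=\mathbf{x}M^{-1}$ on row vectors of $\mathbb{F}_q^s$, such that for every set $I$ of $t_i$ input coordinates and every set $J$ of $s-t_o$ output coordinates, the pair $((x_i)_{i\in I},(y_j)_{j\in J})$ takes every value in $\mathbb{F}_q^{t_i+s-t_o}$ equally often as $\mathbf{x}$ ranges over $\mathbb{F}_q^s$. Equivalently, $M$ is invertible and every $t_o\times t_i$ submatrix of $M$ has rank $t_i$. *)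

theory Defs
  imports "Jordan_Normal_Form.Matrix" "HOL-Library.FuncSet"
begin

definition row_vec_mult :: "'a::semiring_0 vec \<Rightarrow> 'a mat \<Rightarrow> 'a vec" where
  "row_vec_mult x M = vec (dim_col M) (\<lambda>j. x \<bullet> col M j)"

definition inv_of_mat :: "'a::semiring_1 mat \<Rightarrow> 'a mat" where
  "inv_of_mat M = (SOME N. inverts_mat M N \<and> inverts_mat N M)"

(* Linear (t_i, t_o, s, q)-AONT over the finite field 'a (q = CARD('a)), coordinates 0..s-1:
   M is an invertible s x s matrix, and for every set I of t_i input coordinates and every
   set J of s - t_o output coordinates, the pair ((x_i)_{i in I}, (y_j)_{j in J}), with
   y = x M^{-1}, takes every value equally often as x ranges over F_q^s. *)
definition linear_AONT :: "nat \<Rightarrow> nat \<Rightarrow> nat \<Rightarrow> 'a::{field,finite} mat \<Rightarrow> bool" where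
  "linear_AONT ti to s M \<longleftrightarrow>
     M \<in> carrier_mat s s \<and> invertible_mat M \<and>
     (\<forall>I J. I \<subseteq> {..<s} \<and> card I = ti \<and> J \<subseteq> {..<s} \<and> card J = s - to \<longrightarrow>
        (\<exists>c. \<forall>a \<in> I \<rightarrow>\<^sub>E (UNIV :: 'a set). \<forall>b \<in> J \<rightarrow>\<^sub>E (UNIV :: 'a set).
           card {x \<in> carrier_vec s.
                  restrict (vec_index x) I = a \<and>
                  restrict (vec_index (row_vec_mult x (inv_of_mat M))) J = b} = c))"

end

theory Submission
  imports Defs "Berlekamp_Zassenhaus.Berlekamp_Type_Based"
begin

(* The same matrix works for the larger t_o': every set of s - t_o' output coordinates lies
   inside one of s - t_o output coordinates, and equidistribution of a vector of coordinates
   is inherited by any sub-vector, since each value of the sub-vector has the same number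
   q^(t_o' - t_o) of extensions. *)

lemma card_PiE_extensions:
  assumes "finite J" and "J' \<subseteq> J" and "b' \<in> J' \<rightarrow>\<^sub>E B"
  shows "card {b \<in> J \<rightarrow>\<^sub>E B. restrict b J' = b'} = card B ^ card (J - J')"
proof -
  have "{b \<in> J \<rightarrow>\<^sub>E B. restrict b J' = b'} = (\<Pi>\<^sub>E j\<in>J. if j \<in> J' then {b' j} else B)"
    using assms(2,3) by (auto simp: PiE_iff fun_eq_iff extensional_def split: if_splits)
  then show ?thesis
    using assms by (simp add: card_PiE if_distrib[of card] prod.If_cases Diff_eq)
qed

lemma card_fibre_restrict_subset:
  fixes f :: "'x \<Rightarrow> 'i \<Rightarrow> 'b::finite"
  assumes "finite S" and "finite J" and "J' \<subseteq> J"
    and uniform: "\<forall>b \<in> J \<rightarrow>\<^sub>E UNIV. card {x \<in> S. restrict (f x) J = b} = c"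
    and b': "b' \<in> J' \<rightarrow>\<^sub>E UNIV"
  shows "card {x \<in> S. restrict (f x) J' = b'} = c * CARD('b) ^ card (J - J')"
proof -
  let ?E = "{b \<in> J \<rightarrow>\<^sub>E UNIV. restrict b J' = b'}"
  have fibres: "{x \<in> S. restrict (f x) J' = b'} = (\<Union>b\<in>?E. {x \<in> S. restrict (f x) J = b})"
    using \<open>J' \<subseteq> J\<close> by (auto simp: Int_absorb1 Int_commute)
  have "finite ?E"
    using \<open>finite J\<close> by (simp add: finite_PiE)
  then have "card {x \<in> S. restrict (f x) J' = b'} = (\<Sum>b\<in>?E. card {x \<in> S. restrict (f x) J = b})"
    unfolding fibres using \<open>finite S\<close> by (intro card_UN_disjoint) auto
  also have "\<dots> = c * card ?E"
    using uniform by simp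
  also have "card ?E = CARD('b) ^ card (J - J')"
    using card_PiE_extensions[OF \<open>finite J\<close> \<open>J' \<subseteq> J\<close> b'] by simp
  finally show ?thesis .
qed

theorem mainTheorem8:
  fixes M :: "'a::{field,finite} mat"
    and ti to to' s :: nat
  assumes "1 \<le> ti" and "ti \<le> to" and "to \<le> s"
    and "linear_AONT ti to s M"
    and "to \<le> to'" and "to' \<le> s"
  shows "\<exists>M' :: 'a mat. linear_AONT ti to' s M'"
proof (intro exI[of _ M])
  note AONT = assms(4)[unfolded linear_AONT_def]
  show "linear_AONT ti to' s M"
    unfolding linear_AONT_def
  proof (intro conjI allI impI)
    show "M \<in> carrier_mat s s" "invertible_mat M"
      using AONT by auto
    fix I J' assume IJ': "I \<subseteq> {..<s} \<and> card I = ti \<and> J' \<subseteq> {..<s} \<and> card J' = s - to'"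
    have "card J' \<le> s - to"
      using IJ' assms(5) by simp
    then obtain J where J: "J' \<subseteq> J" "J \<subseteq> {..<s}" "card J = s - to"
      using exists_subset_between[of J' "s - to" "{..<s}"] IJ' by auto
    with AONT IJ' obtain c where c: "\<forall>a \<in> I \<rightarrow>\<^sub>E UNIV. \<forall>b \<in> J \<rightarrow>\<^sub>E UNIV.
        card {x \<in> carrier_vec s. restrict (vec_index x) I = a \<and>
                restrict (vec_index (row_vec_mult x (inv_of_mat M))) J = b} = c"
      by blast
    have "card {x \<in> carrier_vec s. restrict (vec_index x) I = a \<and>
                restrict (vec_index (row_vec_mult x (inv_of_mat M))) J' = b}
          = c * CARD('a) ^ card (J - J')"
      if "a \<in> I \<rightarrow>\<^sub>E UNIV" and "b \<in> J' \<rightarrow>\<^sub>E UNIV" for a b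
      using card_fibre_restrict_subset[of "{x \<in> carrier_vec s. restrict (vec_index x) I = a}" J J'
          "\<lambda>x. vec_index (row_vec_mult x (inv_of_mat M))" c b]
        c that J finite_subset[OF J(2)] by (simp add: conj_assoc)
    then show "\<exists>c. \<forall>a \<in> I \<rightarrow>\<^sub>E UNIV. \<forall>b \<in> J' \<rightarrow>\<^sub>E UNIV.
        card {x \<in> carrier_vec s. restrict (vec_index x) I = a \<and>
                restrict (vec_index (row_vec_mult x (inv_of_mat M))) J' = b} = c"
      by blast
  qed
qed

end
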